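(* If $\mathbf{T}\sim\mu$, then for every measurable $\phi:\mathcal{C}_f\to[0,\infty)$, \[ \mathbb{E}\sum_{F\in\mathcal{F}_{\mathbf{T}}}\phi(F^{-1},F\mathbf{T})=\mathbb{E}\sum_{F\in\mathcal{F}_{\mathbf{T}}}\phi(F,\mathbf{T}). \]
   Context: $D\subset\mathbb{R}^2$ is a compact convex polygon. A polygonal tessellation of $D$ is a finite subdivision into polygonal cells with disjoint interiors; vertices are cell vertices; edges are line segments contained in cell edges, ending at vertices, with no other vertex between their ends; segments are maximal unions of aligned contiguous edges. A T-vertex lies at the intersection of exactly three edges, two of them aligned. A T-tessellation of $D$ is a polygonal tessellation all of whose vertices other than those of $D$ are T-vertices, with no pair of distinct aligned segments; $\mathcal{T}$ is the set of these (with the hitting $\sigma$-algebra). An internal segment is blocking if it consists of more than one edge. A flip of $T$ is the deletion of an edge at an end of an internal blocking segment, combined with adding a new edge extending the segment that was blocked at the freed vertex up to the next segment; $\mathcal{F}_T$ is the finite set of flips of $T$, $FT$ the resulting tessellation, $F^{-1}\in\mathcal{F}_{FT}$ the reverse flip. $\mathcal{C}_f=\{(F,T):T\in\mathcal{T},F\in\mathcal{F}_T\}$. For a finite set $L$ of lines hitting $D$, $\mathcal{T}(L)$ is the set of T-tessellations whose internal segments are supported exactly by the lines of $L$. With $\mathbf{L}$ the unit-intensity Poisson line process restricted to $D$, $\mu(A)=Z^{-1}\mathbb{E}\sum_{T\in\mathcal{T}(\mathbf{L})}\mathbf{1}_A(T)$, $Z$ a normalizing constant. *)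

theory Defs
  imports "HOL-Analysis.Analysis"
begin

type_synonym pt = "real^2"
(* A T-tessellation is represented by the finite set of its internal segments
   (closed line segments); the boundary of D is implicit. *)
type_synonym tess = "pt set set"

definition seg_ends :: "pt set \<Rightarrow> pt set" where
  "seg_ends s = {x. \<exists>y. x \<noteq> y \<and> s = closed_segment x y}"

definition is_seg :: "pt set \<Rightarrow> bool" where
  "is_seg s \<longleftrightarrow> (\<exists>a b. a \<noteq> b \<and> s = closed_segment a b)"

definition seg_open :: "pt set \<Rightarrow> pt set" where
  "seg_open s = s - seg_ends s"

definition is_line :: "pt set \<Rightarrow> bool" where
  "is_line l \<longleftrightarrow> (\<exists>a b. a \<noteq> b \<and> l = affine hull {a, b})"

definition aligned :: "pt set \<Rightarrow> pt set \<Rightarrow> bool" where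
  "aligned s t \<longleftrightarrow> (\<exists>l. is_line l \<and> s \<subseteq> l \<and> t \<subseteq> l)"

definition convex_polygon :: "pt set \<Rightarrow> bool" where
  "convex_polygon D \<longleftrightarrow> polytope D \<and> interior D \<noteq> {}"

(* T-tessellations of D: internal segments, pairwise non-aligned, no crossings,
   every vertex other than a vertex (corner) of D is a T-vertex. *)
definition is_Ttess :: "pt set \<Rightarrow> tess \<Rightarrow> bool" where
  "is_Ttess D T \<longleftrightarrow> finite T \<and>
     (\<forall>s\<in>T. is_seg s \<and> s \<subseteq> D \<and> seg_open s \<subseteq> interior D) \<and>
     (\<forall>s\<in>T. \<forall>t\<in>T. s \<noteq> t \<longrightarrow> \<not> aligned s t \<and> seg_open s \<inter> seg_open t = {}) \<and>
     (\<forall>s\<in>T. \<forall>p\<in>seg_ends s. \<not> p extreme_point_of D \<longrightarrow>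
          (\<forall>t\<in>T. t \<noteq> s \<longrightarrow> p \<notin> seg_ends t) \<and>
          (p \<in> frontier D \<or> (\<exists>t\<in>T. p \<in> seg_open t)))"

(* A flip is identified by the pair (a, q): a is the end of the blocking segment s
   whose end edge [a,q] is deleted, q the vertex of s next to a, where the segment t
   blocked by s ends. *)
definition is_flip_pair :: "tess \<Rightarrow> pt \<Rightarrow> pt \<Rightarrow> bool" where
  "is_flip_pair T a q \<longleftrightarrow>
     (\<exists>s\<in>T. a \<in> seg_ends s \<and> q \<in> seg_open s) \<and> (\<exists>t\<in>T. q \<in> seg_ends t) \<and>
     (\<forall>t\<in>T. seg_ends t \<inter> open_segment a q = {})"

definition flip_seg :: "tess \<Rightarrow> pt \<Rightarrow> pt \<Rightarrow> pt set" where
  "flip_seg T a q = (THE s. s \<in> T \<and> a \<in> seg_ends s \<and> q \<in> seg_open s)"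

definition blocked_seg :: "tess \<Rightarrow> pt \<Rightarrow> pt set" where
  "blocked_seg T q = (THE t. t \<in> T \<and> q \<in> seg_ends t)"

definition other_end :: "pt set \<Rightarrow> pt \<Rightarrow> pt" where
  "other_end s p = (THE x. x \<in> seg_ends s \<and> x \<noteq> p)"

definition short_seg :: "tess \<Rightarrow> pt \<Rightarrow> pt \<Rightarrow> pt set" where
  "short_seg T a q = closed_segment q (other_end (flip_seg T a q) a)"

definition del_edge :: "tess \<Rightarrow> pt \<Rightarrow> pt \<Rightarrow> tess" where
  "del_edge T a q = (T - {flip_seg T a q}) \<union> {short_seg T a q}"

definition new_end :: "pt set \<Rightarrow> tess \<Rightarrow> pt \<Rightarrow> pt \<Rightarrow> pt" where
  "new_end D T a q =
     (let t = blocked_seg T q; c = other_end t q;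
          u = Inf {u::real. u > 0 \<and>
                 q + u *\<^sub>R (q - c) \<in> frontier D \<union> \<Union>(del_edge T a q - {t})}
      in q + u *\<^sub>R (q - c))"

definition flip_result :: "pt set \<Rightarrow> pt \<times> pt \<Rightarrow> tess \<Rightarrow> tess" where
  "flip_result D F T = (case F of (a, q) \<Rightarrow>
     (del_edge T a q - {blocked_seg T q}) \<union>
       {closed_segment (other_end (blocked_seg T q) q) (new_end D T a q)})"

(* reverse flip F^{-1} \<in> flips of FT *)
definition flip_inv :: "pt set \<Rightarrow> pt \<times> pt \<Rightarrow> tess \<Rightarrow> pt \<times> pt" where
  "flip_inv D F T = (case F of (a, q) \<Rightarrow> (new_end D T a q, q))"

definition flips :: "pt set \<Rightarrow> tess \<Rightarrow> (pt \<times> pt) set" where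
  "flips D T = {(a, q). is_flip_pair T a q \<and> is_Ttess D (flip_result D (a, q) T)}"

definition tess_M :: "pt set \<Rightarrow> tess measure" where
  "tess_M D = sigma {T. is_Ttess D T}
     {{T. is_Ttess D T \<and> (\<Union>T \<union> frontier D) \<inter> K \<noteq> {}} | K. compact K}"

definition Cf :: "pt set \<Rightarrow> ((pt \<times> pt) \<times> tess) set" where
  "Cf D = {(F, T). is_Ttess D T \<and> F \<in> flips D T}"

definition Cf_M :: "pt set \<Rightarrow> ((pt \<times> pt) \<times> tess) measure" where
  "Cf_M D = restrict_space (borel \<Otimes>\<^sub>M tess_M D) (Cf D)"

definition line_of :: "real \<times> real \<Rightarrow> pt set" where
  "line_of tp = {x. x $ 1 * cos (fst tp) + x $ 2 * sin (fst tp) = snd tp}"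

definition Hset :: "pt set \<Rightarrow> (real \<times> real) set" where
  "Hset D = {tp. 0 \<le> fst tp \<and> fst tp < pi \<and> line_of tp \<inter> D \<noteq> {}}"

(* E h(L) for L the unit-intensity Poisson line process restricted to D
   (intensity d theta dp on lines hitting D) *)
definition PLP_expect :: "pt set \<Rightarrow> (pt set set \<Rightarrow> ennreal) \<Rightarrow> ennreal" where
  "PLP_expect D h = ennreal (exp (- measure lborel (Hset D))) *
     (\<Sum>n. ennreal (1 / fact n) *
        (\<integral>\<^sup>+ f. h ((\<lambda>i. line_of (f i)) ` {..<n})
           \<partial>(PiM {..<n} (\<lambda>_. restrict_space lborel (Hset D)))))"

definition supported_by :: "pt set set \<Rightarrow> tess \<Rightarrow> bool" where
  "supported_by L T \<longleftrightarrow> (\<forall>s\<in>T. \<exists>l\<in>L. s \<subseteq> l) \<and> (\<forall>l\<in>L. \<exists>s\<in>T. s \<subseteq> l)"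

definition TL :: "pt set \<Rightarrow> pt set set \<Rightarrow> tess set" where
  "TL D L = {T. is_Ttess D T \<and> supported_by L T}"

definition Zc :: "pt set \<Rightarrow> ennreal" where
  "Zc D = PLP_expect D (\<lambda>L. of_nat (card (TL D L)))"

(* expectation of g(T) for T ~ mu, mu(A) = Z^{-1} E sum_{T in T(L)} 1_A(T) *)
definition mu_expect :: "pt set \<Rightarrow> (tess \<Rightarrow> ennreal) \<Rightarrow> ennreal" where
  "mu_expect D g = PLP_expect D (\<lambda>L. \<Sum>T\<in>TL D L. g T) / Zc D"

end

theory Submission
  imports Defs
begin

text \<open>
  The identity already holds for every fixed realisation \<open>L\<close> of the line process. A flip
  only shortens the blocking segment and extends the blocked one along its own line, so it
  keeps a tessellation in \<open>\<T>(L)\<close>; and the reverse flip of \<open>F\<close> in \<open>FT\<close> restores \<open>T\<close> and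
  has reverse \<open>F\<close>. Hence \<open>(T, F) \<mapsto> (FT, F\<^sup>-\<^sup>1)\<close> is an involution of the finite set of pairs
  with \<open>T \<in> \<T>(L)\<close>, and reindexing the double sum over \<open>\<T>(L)\<close> by it proves the claim before
  the Poisson expectation is taken.
\<close>

lemma seg_ends_closed_segment: "a \<noteq> b \<Longrightarrow> seg_ends (closed_segment a b) = {a, b}"
  unfolding seg_ends_def by (auto simp: doubleton_eq_iff)

lemma seg_open_closed_segment: "a \<noteq> b \<Longrightarrow> seg_open (closed_segment a b) = open_segment a b"
  by (simp add: seg_open_def seg_ends_closed_segment open_segment_def)

lemma other_end_closed_segment: "a \<noteq> b \<Longrightarrow> other_end (closed_segment a b) a = b"
  unfolding other_end_def seg_ends_closed_segment by auto

lemma seg_ends_subset: "seg_ends w \<subseteq> w"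
  unfolding seg_ends_def by auto

lemma seg_open_subset: "seg_open w \<subseteq> w"
  unfolding seg_open_def by auto

lemma finite_seg_ends: "is_seg w \<Longrightarrow> finite (seg_ends w)"
  unfolding is_seg_def using seg_ends_closed_segment by auto

lemma is_seg_other_end:
  assumes "is_seg w" "p \<in> seg_ends w"
  shows "other_end w p \<noteq> p" "w = closed_segment p (other_end w p)"
    "seg_ends w = {p, other_end w p}"
proof -
  obtain x y where xy: "x \<noteq> y" "w = closed_segment x y"
    using assms(1) is_seg_def by auto
  have "p = x \<or> p = y"
    using assms(2) xy seg_ends_closed_segment by auto
  then show "other_end w p \<noteq> p" "w = closed_segment p (other_end w p)"
    "seg_ends w = {p, other_end w p}"
    using xy other_end_closed_segment seg_ends_closed_segment
      other_end_closed_segment[of y x] seg_ends_closed_segment[of y x]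
    by (auto simp: closed_segment_commute)
qed

lemma closed_segment_subset_affine_hull:
  assumes "x \<noteq> y" "x \<in> closed_segment c d" "y \<in> closed_segment c d"
  shows "closed_segment c d \<subseteq> affine hull {x, y}"
proof
  fix z assume z: "z \<in> closed_segment c d"
  have "collinear {x, y, z}"
    by (rule collinear_subset[OF collinear_closed_segment]) (use assms z in auto)
  then show "z \<in> affine hull {x, y}"
    using collinear_3_affine_hull assms(1) by blast
qed

lemma aligned_if_two_common_points:
  assumes "x \<noteq> y" "is_seg s" "is_seg w" "x \<in> s" "y \<in> s" "x \<in> w" "y \<in> w"
  shows "aligned s w"
proof -
  obtain a b where "s = closed_segment a b" using assms is_seg_def by auto
  moreover obtain c d where "w = closed_segment c d" using assms is_seg_def by auto
  ultimately show ?thesis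
    unfolding aligned_def is_line_def
    using closed_segment_subset_affine_hull[of x y] assms by blast
qed

lemma affine_line_of: "affine (line_of tp)"
  unfolding affine_def line_of_def
proof (intro ballI allI impI, simp)
  fix x y :: pt and u v :: real
  assume h: "x $ 1 * cos (fst tp) + x $ 2 * sin (fst tp) = snd tp"
    "y $ 1 * cos (fst tp) + y $ 2 * sin (fst tp) = snd tp" "u + v = 1"
  then have "u * (x $ 1 * cos (fst tp) + x $ 2 * sin (fst tp))
      + v * (y $ 1 * cos (fst tp) + y $ 2 * sin (fst tp)) = snd tp"
    by (simp add: distrib_right[symmetric])
  then show "(u * x $ 1 + v * y $ 1) * cos (fst tp) + (u * x $ 2 + v * y $ 2) * sin (fst tp) = snd tp"
    by (simp add: algebra_simps)
qed

lemma open_segment_ray_iff: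
  fixes q e :: "'a::real_vector"
  assumes "e \<noteq> 0" "0 < l"
  shows "x \<in> open_segment q (q + l *\<^sub>R e) \<longleftrightarrow> (\<exists>u. 0 < u \<and> u < l \<and> x = q + u *\<^sub>R e)"
proof -
  have ne: "q \<noteq> q + l *\<^sub>R e" using assms by simp
  have "(1 - v) *\<^sub>R q + v *\<^sub>R (q + l *\<^sub>R e) = q + (v * l) *\<^sub>R e" for v
    by (simp add: algebra_simps)
  moreover have "(0 < v \<and> v < 1) \<longleftrightarrow> (0 < v * l \<and> v * l < l)" for v
    using assms(2) by (simp add: zero_less_mult_iff mult_less_cancel_right2)
  moreover have "u = (u / l) * l" for u using assms(2) by simp
  ultimately show ?thesis
    unfolding in_segment(2) using ne by metis
qed

lemma open_segment_imp_ray: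
  fixes a b q :: "'a::real_vector"
  assumes "q \<in> open_segment a b"
  shows "\<exists>l>0. a = q + l *\<^sub>R (q - b)"
proof -
  obtain m where m: "0 < m" "m < 1" "q = (1 - m) *\<^sub>R a + m *\<^sub>R b"
    using assms in_segment(2) by blast
  have "q - b = (1 - m) *\<^sub>R (a - b)"
    unfolding m(3) by (simp add: algebra_simps)
  then have "q + (m / (1 - m)) *\<^sub>R (q - b) = q + m *\<^sub>R (a - b)"
    using m(2) by simp
  also have "\<dots> = a"
    unfolding m(3) by (simp add: algebra_simps)
  finally show ?thesis
    using m by (metis divide_pos_pos diff_gt_0_iff_gt)
qed

lemma mem_open_segment_extension:
  fixes c q :: "'a::real_vector"
  assumes "c \<noteq> q" "0 < u"
  shows "q \<in> open_segment c (q + u *\<^sub>R (q - c))"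
proof -
  define v where "v = 1 / (1 + u)"
  have "(1 - v) *\<^sub>R c + v *\<^sub>R (q + u *\<^sub>R (q - c)) = c + (v * (1 + u)) *\<^sub>R (q - c)"
    by (simp add: algebra_simps)
  also have "\<dots> = q"
    using assms(2) by (simp add: v_def)
  finally have "q = (1 - v) *\<^sub>R c + v *\<^sub>R (q + u *\<^sub>R (q - c))" ..
  moreover have "0 < v" "v < 1"
    using assms(2) unfolding v_def by auto
  moreover have "c \<noteq> q + u *\<^sub>R (q - c)"
  proof
    assume "c = q + u *\<^sub>R (q - c)"
    then have "(1 + u) *\<^sub>R (q - c) = 0" by (simp add: algebra_simps)
    with assms show False by simp
  qed
  ultimately show ?thesis
    using in_segment(2) by metis
qed

lemma Inf_first_positive_eq:
  fixes l :: real
  assumes "P l" "0 < l" "\<And>u. 0 < u \<Longrightarrow> u < l \<Longrightarrow> \<not> P u"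
  shows "Inf {u. 0 < u \<and> P u} = l"
  by (rule cInf_eq_minimum) (use assms not_le in auto)

lemma below_Inf_positive:
  fixes u :: real
  assumes "0 < u" "u < Inf {u. 0 < u \<and> P u}"
  shows "\<not> P u"
proof
  assume "P u"
  moreover have "bdd_below {u. 0 < u \<and> P u}"
    by (rule bdd_belowI[of _ 0]) auto
  ultimately have "Inf {u. 0 < u \<and> P u} \<le> u"
    using assms(1) by (simp add: cInf_lower)
  with assms(2) show False by simp
qed

lemma Inf_positive_nonneg:
  fixes u :: real
  assumes "0 < u" "P u"
  shows "0 \<le> Inf {u. 0 < u \<and> P u}"
  by (rule cInf_greatest) (use assms in auto)

lemma ray_hits_frontier:
  fixes q e :: "'a::euclidean_space"
  assumes "compact D" "q \<in> interior D" "e \<noteq> 0"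
  shows "\<exists>u>0. q + u *\<^sub>R e \<in> frontier D"
proof -
  obtain M where M: "\<And>x. x \<in> D \<Longrightarrow> norm x \<le> M"
    using compact_imp_bounded[OF assms(1)] unfolding bounded_iff by blast
  have nq: "norm q \<le> M"
    using M assms(2) interior_subset by blast
  define l where "l = (M + norm q + 1) / norm e"
  have "0 < M + norm q + 1"
    using nq norm_ge_zero[of q] by linarith
  then have l: "0 < l" "norm (l *\<^sub>R e) = M + norm q + 1"
    using assms(3) unfolding l_def by auto
  have "norm (l *\<^sub>R e) \<le> norm (q + l *\<^sub>R e) + norm q"
    by (metis add_diff_cancel_left' norm_triangle_ineq4 add.commute)
  then have "q + l *\<^sub>R e \<notin> D"
    using M l(2) by fastforce
  then obtain z where z: "z \<in> open_segment q (q + l *\<^sub>R e) \<or> z = q + l *\<^sub>R e" "z \<in> frontier D"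
    using connected_Int_frontier[of "closed_segment q (q + l *\<^sub>R e)" D] assms(2) interior_subset
    by (auto simp: open_segment_def frontier_def)
  then show ?thesis
    using l(1) open_segment_ray_iff[OF assms(3) l(1)] by auto
qed

lemma affine_ray_mem:
  assumes "affine l" "c \<in> l" "q \<in> l"
  shows "q + u *\<^sub>R (q - c) \<in> l"
proof -
  have "q + u *\<^sub>R (q - c) = (1 + u) *\<^sub>R q + (- u) *\<^sub>R c"
    by (simp add: algebra_simps)
  also have "\<dots> \<in> l"
    by (rule mem_affine) (use assms in auto)
  finally show ?thesis .
qed

lemma is_TtessD:
  assumes "is_Ttess D T"
  shows "finite T"
    and "\<And>w. w \<in> T \<Longrightarrow> is_seg w"
    and "\<And>w. w \<in> T \<Longrightarrow> seg_open w \<subseteq> interior D"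
    and "\<And>w v. w \<in> T \<Longrightarrow> v \<in> T \<Longrightarrow> w \<noteq> v \<Longrightarrow> \<not> aligned w v"
    and "\<And>w v. w \<in> T \<Longrightarrow> v \<in> T \<Longrightarrow> w \<noteq> v \<Longrightarrow> seg_open w \<inter> seg_open v = {}"
    and "\<And>w v p. w \<in> T \<Longrightarrow> p \<in> seg_ends w \<Longrightarrow> \<not> p extreme_point_of D \<Longrightarrow>
           v \<in> T \<Longrightarrow> v \<noteq> w \<Longrightarrow> p \<notin> seg_ends v"
    and "\<And>w p. w \<in> T \<Longrightarrow> p \<in> seg_ends w \<Longrightarrow> \<not> p extreme_point_of D \<Longrightarrow>
           p \<in> frontier D \<or> (\<exists>v\<in>T. p \<in> seg_open v)"
  using assms unfolding is_Ttess_def by meson+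

lemma finite_flips:
  assumes "is_Ttess D T"
  shows "finite (flips D T)"
proof -
  let ?E = "\<Union>(seg_ends ` T)"
  have "finite ?E"
    using is_TtessD(1,2)[OF assms] finite_seg_ends by blast
  moreover have "flips D T \<subseteq> ?E \<times> ?E"
    unfolding flips_def is_flip_pair_def by blast
  ultimately show ?thesis
    by (meson finite_SigmaI finite_subset)
qed

locale T_flip =
  fixes D :: "pt set" and T :: tess and a q :: pt and s t :: "pt set"
  assumes polygon: "convex_polygon D"
    and tess: "is_Ttess D T"
    and flip: "(a, q) \<in> flips D T"
    and s: "s \<in> T" "a \<in> seg_ends s" "q \<in> seg_open s"
    and t: "t \<in> T" "q \<in> seg_ends t"
begin

definition "b = other_end s a"
definition "c = other_end t q"
definition "FT = flip_result D (a, q) T"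

lemmas Ttess_T = is_TtessD[OF tess]

lemma flip_pair: "is_flip_pair T a q"
  and FT_tess: "is_Ttess D FT"
  using flip unfolding flips_def FT_def by auto

lemmas Ttess_FT = is_TtessD[OF FT_tess]

lemma compact_D: "compact D"
  using polygon unfolding convex_polygon_def by (simp add: polytope_imp_compact)

lemma q_interior: "q \<in> interior D"
  using s Ttess_T(3) by blast

lemma q_not_extreme: "\<not> q extreme_point_of D"
  using q_interior extreme_point_not_in_interior by blast

lemma a_neq_q: "a \<noteq> q"
  using s unfolding seg_open_def by auto

lemma s_eq: "b \<noteq> a" "s = closed_segment a b" "seg_ends s = {a, b}"
  using is_seg_other_end[OF Ttess_T(2)[OF s(1)] s(2)] unfolding b_def by auto

lemma t_eq: "c \<noteq> q" "t = closed_segment q c" "seg_ends t = {q, c}"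
  using is_seg_other_end[OF Ttess_T(2)[OF t(1)] t(2)] unfolding c_def by auto

lemma q_neq_b: "q \<noteq> b"
  using s(3) s_eq unfolding seg_open_def by auto

lemma s_neq_t: "s \<noteq> t"
  using s t unfolding seg_open_def by auto

lemma flip_seg_eq: "flip_seg T a q = s"
  unfolding flip_seg_def
proof (rule the_equality)
  fix w assume w: "w \<in> T \<and> a \<in> seg_ends w \<and> q \<in> seg_open w"
  then have "aligned w s"
    using aligned_if_two_common_points[OF a_neq_q, of w s] s Ttess_T(2)
      seg_ends_subset seg_open_subset by blast
  then show "w = s"
    using Ttess_T(4) w s by blast
qed (use s in auto)

lemma blocked_seg_eq: "blocked_seg T q = t"
  unfolding blocked_seg_def
  by (rule the_equality) (use t Ttess_T(6)[OF t(1) t(2) q_not_extreme] in auto)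

lemma qb_subset_s: "closed_segment q b \<subseteq> s"
proof -
  have "q \<in> closed_segment a b"
    using s(3) seg_open_subset s_eq by blast
  then show ?thesis
    using s_eq(2) ends_in_segment(2) by (metis subset_closed_segment)
qed

lemma qb_notin_T: "closed_segment q b \<notin> T"
proof
  assume qb: "closed_segment q b \<in> T"
  have "closed_segment q b \<noteq> s"
    using seg_ends_closed_segment[OF q_neq_b] s_eq s(3) unfolding seg_open_def by auto
  moreover have "aligned (closed_segment q b) s"
    using aligned_if_two_common_points[OF q_neq_b] qb_subset_s Ttess_T(2)[OF qb] Ttess_T(2)[OF s(1)] by auto
  ultimately show False
    using Ttess_T(4)[OF qb s(1)] by blast
qed

lemma del_edge_eq: "del_edge T a q = (T - {s}) \<union> {closed_segment q b}"
  unfolding del_edge_def short_seg_def flip_seg_eq b_def ..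

lemma qb_neq_t: "closed_segment q b \<noteq> t"
  using qb_notin_T t by auto

lemma q_end_qb: "q \<in> seg_ends (closed_segment q b)"
  using seg_ends_closed_segment[OF q_neq_b] by auto

definition "hits = frontier D \<union> \<Union>(del_edge T a q - {t})"
definition "u0 = Inf {u. 0 < u \<and> q + u *\<^sub>R (q - c) \<in> hits}"
definition "r = q + u0 *\<^sub>R (q - c)"
definition "t_ext = closed_segment c r"

lemma new_end_eq: "new_end D T a q = r"
  unfolding new_end_def Let_def blocked_seg_eq c_def[symmetric] r_def u0_def hits_def ..

lemma FT_eq: "FT = (del_edge T a q - {t}) \<union> {t_ext}"
  by (simp add: FT_def flip_result_def blocked_seg_eq c_def new_end_eq t_ext_def)

lemma mem_FT: "w \<in> FT \<longleftrightarrow> (w \<in> T \<and> w \<noteq> s \<and> w \<noteq> t) \<or> w = closed_segment q b \<or> w = t_ext"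
  unfolding FT_eq del_edge_eq using qb_neq_t by auto

lemma u0_pos: "0 < u0"
proof -
  obtain u where "0 < u" "q + u *\<^sub>R (q - c) \<in> frontier D"
    using ray_hits_frontier[OF compact_D q_interior, of "q - c"] t_eq(1) by auto
  then have "0 \<le> u0"
    unfolding u0_def hits_def by (intro Inf_positive_nonneg) auto
  moreover have "u0 \<noteq> 0"
  proof
    assume "u0 = 0"
    then have "t_ext = t"
      using t_eq(2) by (simp add: r_def t_ext_def closed_segment_commute)
    moreover have "t_ext \<in> FT" "closed_segment q b \<in> FT"
      by (simp_all add: mem_FT)
    ultimately show False
      using Ttess_FT(6)[OF _ q_end_qb q_not_extreme] qb_neq_t t(2) by metis
  qed
  ultimately show ?thesis by simp
qed

lemma below_u0_misses: "0 < u \<Longrightarrow> u < u0 \<Longrightarrow> q + u *\<^sub>R (q - c) \<notin> hits"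
  unfolding u0_def by (rule below_Inf_positive)

lemma q_in_open_segment_c_r: "q \<in> open_segment c r"
  unfolding r_def using mem_open_segment_extension[OF t_eq(1) u0_pos] .

lemma r_neq_q: "r \<noteq> q" and r_neq_c: "r \<noteq> c"
  using q_in_open_segment_c_r by (auto simp: open_segment_def)

lemma t_ext_eq: "seg_ends t_ext = {c, r}" "seg_open t_ext = open_segment c r"
  using seg_ends_closed_segment[OF r_neq_c[symmetric]] seg_open_closed_segment[OF r_neq_c[symmetric]]
  unfolding t_ext_def by auto

lemma q_in_t_ext: "q \<in> t_ext" and c_in_t_ext: "c \<in> t_ext" and r_in_t_ext: "r \<in> t_ext"
  using q_in_open_segment_c_r open_closed_segment unfolding t_ext_def by auto

lemma t_ext_notin_T: "t_ext \<notin> T"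
proof
  assume t_ext: "t_ext \<in> T"
  have "t_ext \<noteq> t"
  proof
    assume "t_ext = t"
    then have "{c, r} = {q, c}"
      using t_ext_eq(1) t_eq(3) by simp
    then show False
      using r_neq_q r_neq_c by (auto simp: doubleton_eq_iff)
  qed
  moreover have "aligned t t_ext"
  proof (rule aligned_if_two_common_points[OF t_eq(1)[symmetric]])
    show "is_seg t" "is_seg t_ext"
      using Ttess_T(2) t(1) t_ext by auto
  qed (use q_in_t_ext c_in_t_ext t_eq(2) in auto)
  ultimately show False
    using Ttess_T(4)[OF t(1) t_ext] by auto
qed

lemma flip_pair_FT: "is_flip_pair FT r q"
proof -
  have "seg_ends w \<inter> open_segment r q = {}" if w: "w \<in> FT" for w
  proof (rule ccontr)
    assume "seg_ends w \<inter> open_segment r q \<noteq> {}"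
    then obtain x where x: "x \<in> seg_ends w" "x \<in> open_segment r q" by blast
    show False
    proof (cases "w = t_ext")
      case True
      have "open_segment r q \<subseteq> open_segment c r"
        using q_in_t_ext r_in_t_ext unfolding t_ext_def by (simp add: subset_open_segment)
      then show False
        using x True t_ext_eq(1) by (auto simp: open_segment_def)
    next
      case False
      then have "(w \<in> T \<and> w \<noteq> s \<and> w \<noteq> t) \<or> w = closed_segment q b"
        using w mem_FT by blast
      then have "w \<in> del_edge T a q - {t}"
        using qb_neq_t unfolding del_edge_eq by blast
      then have "x \<in> hits"
        using x(1) seg_ends_subset unfolding hits_def by blast
      moreover have "x \<in> open_segment q (q + u0 *\<^sub>R (q - c))"
        using x(2) unfolding r_def by (simp add: open_segment_commute)
      then obtain u where "0 < u" "u < u0" "x = q + u *\<^sub>R (q - c)"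
        using open_segment_ray_iff[OF _ u0_pos] t_eq(1) by (metis right_minus_eq)
      ultimately show False
        using below_u0_misses by blast
    qed
  qed
  moreover have "t_ext \<in> FT" "closed_segment q b \<in> FT"
    by (simp_all add: mem_FT)
  ultimately show ?thesis
    unfolding is_flip_pair_def using t_ext_eq q_in_open_segment_c_r q_end_qb by blast
qed

lemma flip_seg_FT: "flip_seg FT r q = t_ext"
  unfolding flip_seg_def
proof (rule the_equality)
  fix w assume w: "w \<in> FT \<and> r \<in> seg_ends w \<and> q \<in> seg_open w"
  have "t_ext \<in> FT"
    using mem_FT by simp
  moreover have "aligned w t_ext"
  proof (rule aligned_if_two_common_points[OF r_neq_q])
    show "is_seg w" "is_seg t_ext"
      using Ttess_FT(2) w \<open>t_ext \<in> FT\<close> by auto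
    show "r \<in> w" "q \<in> w"
      using w seg_ends_subset seg_open_subset by blast+
  qed (use r_in_t_ext q_in_t_ext in auto)
  ultimately show "w = t_ext"
    using Ttess_FT(4) w by blast
qed (use mem_FT t_ext_eq q_in_open_segment_c_r in auto)

lemma blocked_seg_FT: "blocked_seg FT q = closed_segment q b"
  unfolding blocked_seg_def
proof (rule the_equality)
  have qb: "closed_segment q b \<in> FT"
    by (simp add: mem_FT)
  then show "closed_segment q b \<in> FT \<and> q \<in> seg_ends (closed_segment q b)"
    using q_end_qb by blast
  show "w = closed_segment q b" if "w \<in> FT \<and> q \<in> seg_ends w" for w
    using that Ttess_FT(6)[OF qb q_end_qb q_not_extreme] by blast
qed

lemma short_seg_FT: "short_seg FT r q = t"
proof -
  have "t_ext = closed_segment r c"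
    unfolding t_ext_def by (rule closed_segment_commute)
  then have "other_end t_ext r = c"
    using other_end_closed_segment[OF r_neq_c] by simp
  then show ?thesis
    using t_eq(2) by (simp add: short_seg_def flip_seg_FT)
qed

lemma del_edge_FT: "del_edge FT r q - {closed_segment q b} = T - {s}"
proof (intro set_eqI)
  fix w
  have "w \<in> del_edge FT r q - {closed_segment q b} \<longleftrightarrow>
      (w \<in> FT \<and> w \<noteq> t_ext \<or> w = t) \<and> w \<noteq> closed_segment q b"
    unfolding del_edge_def flip_seg_FT short_seg_FT by blast
  also have "\<dots> \<longleftrightarrow> w \<in> T - {s}"
    using mem_FT[of w] qb_notin_T s_neq_t t(1) t_ext_notin_T qb_neq_t by blast
  finally show "w \<in> del_edge FT r q - {closed_segment q b} \<longleftrightarrow> w \<in> T - {s}" .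
qed

lemma a_hits: "a \<in> frontier D \<union> \<Union>(T - {s})"
proof (cases "a extreme_point_of D")
  case True
  then have "a \<in> D" "a \<notin> interior D"
    using extreme_point_not_in_interior extreme_point_of_def by auto
  then show ?thesis
    using compact_D by (simp add: frontier_def closure_closed compact_imp_closed)
next
  case False
  from Ttess_T(7)[OF s(1) s(2) False] show ?thesis
  proof
    assume "\<exists>v\<in>T. a \<in> seg_open v"
    then obtain v where v: "v \<in> T" "a \<in> seg_open v" by blast
    moreover have "v \<noteq> s"
      using v(2) s(2) unfolding seg_open_def by auto
    ultimately show ?thesis
      using seg_open_subset by blast
  qed simp
qed

lemma open_segment_a_q_misses:
  assumes x: "x \<in> open_segment a q"
  shows "x \<notin> frontier D \<union> \<Union>(T - {s})"
proof -
  have "q \<in> closed_segment a b"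
    using s(3) seg_open_subset s_eq(2) by blast
  then have "x \<in> seg_open s"
    using x seg_open_closed_segment[OF s_eq(1)[symmetric]] s_eq(2)
    by (metis ends_in_segment(1) subset_open_segment subsetD)
  then have "x \<in> interior D"
    using Ttess_T(3)[OF s(1)] by blast
  moreover have "x \<notin> w" if w: "w \<in> T" "w \<noteq> s" for w
  proof
    assume "x \<in> w"
    moreover have "x \<notin> seg_ends w"
      using flip_pair w(1) x unfolding is_flip_pair_def by blast
    ultimately have "x \<in> seg_open w"
      unfolding seg_open_def by blast
    with Ttess_T(5)[OF w(1) s(1) w(2)] \<open>x \<in> seg_open s\<close> show False by blast
  qed
  ultimately show ?thesis
    by (auto simp: frontier_def)
qed

lemma new_end_FT: "new_end D FT r q = a"
proof -
  have "q \<in> open_segment a b"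
    using s(3) seg_open_closed_segment[OF s_eq(1)[symmetric]] s_eq(2) by simp
  then obtain l where l: "0 < l" "a = q + l *\<^sub>R (q - b)"
    using open_segment_imp_ray by blast
  have "Inf {u. 0 < u \<and> q + u *\<^sub>R (q - b) \<in> frontier D \<union> \<Union>(T - {s})} = l"
  proof (rule Inf_first_positive_eq)
    show "q + l *\<^sub>R (q - b) \<in> frontier D \<union> \<Union>(T - {s})"
      using a_hits l(2) by simp
    fix u :: real assume "0 < u" "u < l"
    moreover have "q - b \<noteq> 0"
      using q_neq_b by simp
    ultimately have "q + u *\<^sub>R (q - b) \<in> open_segment q (q + l *\<^sub>R (q - b))"
      using open_segment_ray_iff[OF _ l(1)] by blast
    then have "q + u *\<^sub>R (q - b) \<in> open_segment a q"
      using l(2) by (simp add: open_segment_commute)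
    then show "q + u *\<^sub>R (q - b) \<notin> frontier D \<union> \<Union>(T - {s})"
      by (rule open_segment_a_q_misses)
  qed (use l in simp)
  then show ?thesis
    unfolding new_end_def Let_def blocked_seg_FT other_end_closed_segment[OF q_neq_b] del_edge_FT
    using l(2) by simp
qed

lemma flip_result_FT: "flip_result D (r, q) FT = T"
proof -
  have "flip_result D (r, q) FT = (T - {s}) \<union> {closed_segment b a}"
    by (simp only: flip_result_def prod.case blocked_seg_FT other_end_closed_segment[OF q_neq_b]
        del_edge_FT new_end_FT)
  then show ?thesis
    using s(1) s_eq(2) by (auto simp: closed_segment_commute)
qed

lemma reverse_flip_mem: "(r, q) \<in> flips D FT"
  unfolding flips_def using flip_pair_FT flip_result_FT tess by simp

lemma flip_inv_eq: "flip_inv D (a, q) T = (r, q)"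
  by (simp add: flip_inv_def new_end_eq)

lemma flip_inv_FT: "flip_inv D (r, q) FT = (a, q)"
  by (simp add: flip_inv_def new_end_FT)

lemma supported_by_FT:
  assumes L: "supported_by L T" "\<forall>l\<in>L. affine l"
  shows "supported_by L FT"
proof -
  have t_ext_subset: "t_ext \<subseteq> l" if "t \<subseteq> l" "l \<in> L" for l
  proof -
    have "c \<in> l" "q \<in> l" "affine l"
      using that t_eq(2) L(2) by auto
    then show ?thesis
      unfolding t_ext_def r_def
      by (metis affine_ray_mem affine_imp_convex closed_segment_subset)
  qed
  have "\<exists>l\<in>L. w \<subseteq> l" if w: "w \<in> FT" for w
  proof -
    consider "w \<in> T" | "w = closed_segment q b" | "w = t_ext"
      using mem_FT[of w] w by blast
    then show ?thesis
    proof cases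
      case 1
      then show ?thesis
        using L(1) unfolding supported_by_def by blast
    next
      case 2
      obtain l where "l \<in> L" "s \<subseteq> l"
        using L(1) s(1) unfolding supported_by_def by blast
      then show ?thesis
        using 2 qb_subset_s by blast
    next
      case 3
      obtain l where "l \<in> L" "t \<subseteq> l"
        using L(1) t(1) unfolding supported_by_def by blast
      then show ?thesis
        using 3 t_ext_subset by blast
    qed
  qed
  moreover have "\<exists>w\<in>FT. w \<subseteq> l" if l: "l \<in> L" for l
  proof -
    obtain w where w: "w \<in> T" "w \<subseteq> l"
      using L(1) l unfolding supported_by_def by blast
    have "t_ext \<in> FT" "closed_segment q b \<in> FT"
      by (simp_all add: mem_FT)
    consider "w = s" | "w = t" | "w \<in> T" "w \<noteq> s" "w \<noteq> t"
      using w(1) by blast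
    then show ?thesis
    proof cases
      case 1
      then show ?thesis
        using w(2) qb_subset_s \<open>closed_segment q b \<in> FT\<close> by blast
    next
      case 2
      then show ?thesis
        using w(2) l t_ext_subset \<open>t_ext \<in> FT\<close> by blast
    next
      case 3
      then show ?thesis
        using w(2) mem_FT[of w] by blast
    qed
  qed
  ultimately show ?thesis
    unfolding supported_by_def by blast
qed

end

lemma flip_involution:
  assumes D: "convex_polygon D" and T: "is_Ttess D T" and F: "F \<in> flips D T"
  shows "flip_inv D F T \<in> flips D (flip_result D F T)"
    and "flip_result D (flip_inv D F T) (flip_result D F T) = T"
    and "flip_inv D (flip_inv D F T) (flip_result D F T) = F"
    and "supported_by L T \<Longrightarrow> \<forall>l\<in>L. affine l \<Longrightarrow> supported_by L (flip_result D F T)"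
proof -
  obtain a q where F_eq: "F = (a, q)"
    by fastforce
  then have "is_flip_pair T a q"
    using F unfolding flips_def by blast
  then obtain s t where "s \<in> T" "a \<in> seg_ends s" "q \<in> seg_open s" "t \<in> T" "q \<in> seg_ends t"
    unfolding is_flip_pair_def by blast
  then interpret T_flip D T a q s t
    using D T F F_eq by unfold_locales auto
  show "flip_inv D F T \<in> flips D (flip_result D F T)"
    "flip_result D (flip_inv D F T) (flip_result D F T) = T"
    "flip_inv D (flip_inv D F T) (flip_result D F T) = F"
    using reverse_flip_mem flip_result_FT flip_inv_FT
    unfolding F_eq flip_inv_eq FT_def[symmetric] by simp_all
  show "supported_by L T \<Longrightarrow> \<forall>l\<in>L. affine l \<Longrightarrow> supported_by L (flip_result D F T)"
    using supported_by_FT unfolding F_eq FT_def by blast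
qed

lemma sum_TL_flips_reverse:
  fixes g :: "(pt \<times> pt) \<times> tess \<Rightarrow> 'a::comm_monoid_add"
  assumes D: "convex_polygon D" and L: "\<forall>l\<in>L. affine l"
  shows "(\<Sum>T\<in>TL D L. \<Sum>F\<in>flips D T. g (flip_inv D F T, flip_result D F T))
       = (\<Sum>T\<in>TL D L. \<Sum>F\<in>flips D T. g (F, T))"
proof (cases "finite (TL D L)")
  case True
  have fin: "finite (flips D T)" if "T \<in> TL D L" for T
    using finite_flips that unfolding TL_def by blast
  define G where "G = (\<lambda>(T, F). (flip_result D F T, flip_inv D F T))"
  have G: "G x \<in> Sigma (TL D L) (flips D) \<and> G (G x) = x" if x_mem: "x \<in> Sigma (TL D L) (flips D)" for x
  proof -
    obtain T F where x: "x = (T, F)" "is_Ttess D T" "supported_by L T" "F \<in> flips D T"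
      using x_mem unfolding TL_def by blast
    have "is_Ttess D (flip_result D F T)"
      using x(4) unfolding flips_def by (auto split: prod.splits)
    then show ?thesis
      using flip_involution[OF D x(2) x(4)] x(3) L unfolding x(1) G_def TL_def by auto
  qed
  have "(\<Sum>T\<in>TL D L. \<Sum>F\<in>flips D T. g (flip_inv D F T, flip_result D F T))
      = (\<Sum>x\<in>Sigma (TL D L) (flips D). (\<lambda>(T, F). g (F, T)) (G x))"
    unfolding G_def using True fin by (subst sum.Sigma) (auto simp: case_prod_beta)
  also have "\<dots> = (\<Sum>x\<in>Sigma (TL D L) (flips D). (\<lambda>(T, F). g (F, T)) x)"
    by (rule sum.reindex_bij_witness[where i = G and j = G]) (use G in auto)
  also have "\<dots> = (\<Sum>T\<in>TL D L. \<Sum>F\<in>flips D T. g (F, T))"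
    using True fin by (subst sum.Sigma) auto
  finally show ?thesis .
qed simp

theorem corollary3:
  fixes D :: "pt set" and \<phi> :: "(pt \<times> pt) \<times> tess \<Rightarrow> real"
  assumes "convex_polygon D"
    and "\<phi> \<in> borel_measurable (Cf_M D)"
    and "\<forall>x\<in>Cf D. 0 \<le> \<phi> x"
  shows "mu_expect D (\<lambda>T. \<Sum>F\<in>flips D T. ennreal (\<phi> (flip_inv D F T, flip_result D F T)))
       = mu_expect D (\<lambda>T. \<Sum>F\<in>flips D T. ennreal (\<phi> (F, T)))"
proof -
  have pointwise: "(\<Sum>T\<in>TL D ((\<lambda>i. line_of (f i)) ` {..<n}).
          \<Sum>F\<in>flips D T. ennreal (\<phi> (flip_inv D F T, flip_result D F T)))
      = (\<Sum>T\<in>TL D ((\<lambda>i. line_of (f i)) ` {..<n}). \<Sum>F\<in>flips D T. ennreal (\<phi> (F, T)))"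
    for n and f :: "nat \<Rightarrow> real \<times> real"
    by (rule sum_TL_flips_reverse[OF assms(1)]) (auto simp: affine_line_of)
  show ?thesis
    unfolding mu_expect_def PLP_expect_def pointwise ..
qed

end
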